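(* Let $n\geq 1$, let $A\subseteq \mathbb{Z}^n$, and suppose $\dim \mathrm{Nb}(A)=d$ for some $d\in\mathbb{N}$. Then $\mathrm{Nb}(A)$ is locally finite; equivalently, every $a\in A$ has only finitely many $A$-neighbors.
   Context: For $a,b\in\mathbb{R}^n$, write $a \ll b$ if $\pi_i(a)<\pi_i(b)$ for all $i=1,\dots,n$, where $\pi_i$ is the $i$-th coordinate. For $B\subseteq\mathbb{R}^n$, $\vee B$ denotes the coordinatewise supremum in $(\mathbb{R}\cup\{\pm\infty\})^n$, i.e. $\pi_i(\vee B)=\sup\{\pi_i(b)\mid b\in B\}$. For $A\subseteq\mathbb{R}^n$, the neighbor complex $\mathrm{Nb}(A)$ is the set of all subsets $B\subseteq A$ such that there is no $a\in A$ with $a\ll \vee B$; it is an abstract simplicial complex on the vertex set $A$. Two points $a,a'\in A$ are called $A$-neighbors if $\{a,a'\}\in\mathrm{Nb}(A)$. For $B\in\mathrm{Nb}(A)$, $\dim B:=\mathrm{card}(B)-1$. We say $\dim\mathrm{Nb}(A)=d$ if $\dim B\leq d$ for all $B\in\mathrm{Nb}(A)$ and $\dim B=d$ for at least one $B\in\mathrm{Nb}(A)$. A simplicial complex is locally finite if each vertex is contained in only finitely many simplices. *)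

theory Defs
  imports "HOL-Analysis.Analysis"
begin

text \<open>Coordinatewise strict order: a << b iff every coordinate of a is smaller.
  The coordinatewise supremum of B lives in extended reals; we compare coordinatewise.\<close>

definition ll_sup :: "real^'n \<Rightarrow> (real^'n) set \<Rightarrow> bool" where
  "ll_sup a B \<longleftrightarrow> (\<forall>i. ereal (a $ i) < (SUP b\<in>B. ereal (b $ i)))"

definition Nb :: "(real^'n) set \<Rightarrow> (real^'n) set set" where
  "Nb A = {B. B \<subseteq> A \<and> \<not> (\<exists>a\<in>A. ll_sup a B)}"

definition neighbors :: "(real^'n) set \<Rightarrow> real^'n \<Rightarrow> real^'n \<Rightarrow> bool" where
  "neighbors A a a' \<longleftrightarrow> {a, a'} \<in> Nb A"

text \<open>dim B = card B - 1, which is infinite for infinite B; so dim Nb(A) = d means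
  every simplex is finite with at most d+1 elements, and some has exactly d+1.\<close>
definition dim_Nb_eq :: "(real^'n) set \<Rightarrow> nat \<Rightarrow> bool" where
  "dim_Nb_eq A d \<longleftrightarrow>
     (\<forall>B\<in>Nb A. finite B \<and> card B \<le> d + 1) \<and> (\<exists>B\<in>Nb A. finite B \<and> card B = d + 1)"

definition locally_finite_complex :: "'a set \<Rightarrow> 'a set set \<Rightarrow> bool" where
  "locally_finite_complex V K \<longleftrightarrow> (\<forall>v\<in>V. finite {B\<in>K. v \<in> B})"

end

theory Submission
  imports Defs
begin

text \<open>If a point \<open>a\<close> of \<open>A \<subseteq> \<int>\<^sup>n\<close> had infinitely many neighbors, a subsequence of them
  would be monotone in every coordinate. Coordinatewise, \<open>max a\<^sub>i t\<^sub>i\<close> is then eventually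
  nondecreasing (a decreasing integer sequence bounded below stabilises), so a tail segment
  \<open>t\<^sub>K, \<dots>, t\<^sub>L\<close> together with \<open>a\<close> has the same coordinatewise supremum as the edge \<open>{a, t\<^sub>L}\<close>.
  That set is therefore a simplex of arbitrarily large size, contradicting the dimension bound.
  Local finiteness follows because every simplex through \<open>a\<close> consists of neighbors of \<open>a\<close>.\<close>

lemma monoseq_comp_strict_mono:
  assumes "monoseq X" "strict_mono r"
  shows "monoseq (\<lambda>k. X (r k))"
  using assms unfolding monoseq_def by (meson strict_mono_less_eq)

lemma finite_coordinates_monoseq_subseq:
  fixes x :: "nat \<Rightarrow> 'i \<Rightarrow> real"
  assumes "finite I"
  shows "\<exists>r. strict_mono r \<and> (\<forall>i\<in>I. monoseq (\<lambda>k. x (r k) i))"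
  using assms
proof (induction I rule: finite_induct)
  case empty
  show ?case by (rule exI[of _ id]) (auto simp: strict_mono_def)
next
  case (insert j I)
  then obtain r where r: "strict_mono r" "\<forall>i\<in>I. monoseq (\<lambda>k. x (r k) i)" by blast
  obtain r' where r': "strict_mono r'" "monoseq (\<lambda>k. x (r (r' k)) j)"
    using seq_monosub[of "\<lambda>k. x (r k) j"] by blast
  have "strict_mono (r \<circ> r')" using r r' strict_mono_o by blast
  moreover have "\<forall>i\<in>insert j I. monoseq (\<lambda>k. x ((r \<circ> r') k) i)"
    using r r' monoseq_comp_strict_mono[of _ r'] by auto
  ultimately show ?case by blast
qed

lemma eventually_mono_max_monoseq_Ints:
  fixes u :: "nat \<Rightarrow> real"
  assumes "monoseq u" "\<forall>k. u k \<in> \<int>" "c \<in> \<int>"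
  shows "\<forall>\<^sub>F j in sequentially. \<forall>k\<ge>j. max c (u j) \<le> max c (u k)"
proof (cases "incseq u")
  case True
  then show ?thesis
    unfolding eventually_sequentially incseq_def by (metis max.mono order_refl)
next
  case False
  with assms(1) have dec: "decseq u" unfolding monoseq_iff by blast
  define m where "m k = \<lfloor>max c (u k)\<rfloor>" for k
  have max_eq: "max c (u k) = of_int (m k)" for k
    using assms(2,3) unfolding m_def by (metis Ints_cases floor_of_int max_def)
  have m_antimono: "m k \<le> m j" if "j \<le> k" for j k
    unfolding m_def using dec that by (intro floor_mono max.mono) (auto simp: decseq_def)
  have "range m \<subseteq> {\<lfloor>c\<rfloor>..m 0}"
    using m_antimono unfolding m_def by (auto simp: floor_mono)
  then have "finite (range m)"
    using finite_subset by blast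
  then obtain K where K: "\<And>k. m K \<le> m k"
    using Min_in[of "range m"] Min_le[of "range m"] by (metis UNIV_not_empty image_is_empty rangeE rangeI)
  have "\<forall>k\<ge>j. max c (u j) \<le> max c (u k)" if "K \<le> j" for j
  proof (intro allI impI)
    fix k assume "j \<le> k"
    then have "m j = m k"
      using m_antimono[OF \<open>K \<le> j\<close>] m_antimono[of j k] K[of k] by linarith
    then show "max c (u j) \<le> max c (u k)" by (simp add: max_eq)
  qed
  then show ?thesis unfolding eventually_sequentially by blast
qed

text \<open>Membership in \<open>Nb A\<close> depends only on the coordinatewise suprema of a subset of \<open>A\<close>.\<close>

lemma Nb_if_dominated:
  assumes "C \<in> Nb A" "B \<subseteq> A" "\<And>b i. b \<in> B \<Longrightarrow> \<exists>c\<in>C. b $ i \<le> c $ i"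
  shows "B \<in> Nb A"
proof -
  have "(SUP b\<in>B. ereal (b $ i)) \<le> (SUP c\<in>C. ereal (c $ i))" for i
  proof (rule SUP_mono)
    fix b assume "b \<in> B"
    then show "\<exists>c\<in>C. ereal (b $ i) \<le> ereal (c $ i)" using assms(3) by simp
  qed
  then have "ll_sup x B \<Longrightarrow> ll_sup x C" for x
    unfolding ll_sup_def using order_less_le_trans by blast
  with assms(1,2) show ?thesis unfolding Nb_def by blast
qed

lemma Nb_subset_closed:
  assumes "C \<in> Nb A" "B \<subseteq> C"
  shows "B \<in> Nb A"
proof (rule Nb_if_dominated[OF assms(1)])
  show "B \<subseteq> A" using assms unfolding Nb_def by blast
qed (use assms(2) in blast)

lemma finite_neighbors_if_Nb_card_bounded:
  fixes A :: "(real^'n) set"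
  assumes Ints: "\<forall>a\<in>A. \<forall>i. a $ i \<in> \<int>"
    and bounded: "\<And>B. B \<in> Nb A \<Longrightarrow> finite B \<Longrightarrow> card B \<le> N"
    and "a \<in> A"
  shows "finite {a'\<in>A. neighbors A a a'}"
proof (rule ccontr)
  assume "infinite {a'\<in>A. neighbors A a a'}"
  then obtain s :: "nat \<Rightarrow> real^'n" where s: "inj s" "range s \<subseteq> {a'\<in>A. neighbors A a a'}"
    using infinite_countable_subset by blast
  obtain r where r: "strict_mono r" "\<forall>i. monoseq (\<lambda>k. s (r k) $ i)"
    using finite_coordinates_monoseq_subseq[of UNIV "\<lambda>k i. s k $ i"] by auto
  define t where "t k = s (r k)" for k
  have "inj t"
    unfolding inj_def t_def using s(1) r(1) by (simp add: inj_eq strict_mono_eq)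
  have tA: "t k \<in> A" and edge: "{a, t k} \<in> Nb A" for k
    using s(2) unfolding t_def neighbors_def by auto
  have "\<forall>\<^sub>F j in sequentially. \<forall>i. \<forall>k\<ge>j. max (a $ i) (t j $ i) \<le> max (a $ i) (t k $ i)"
  proof (rule eventually_all_finite)
    fix i
    show "\<forall>\<^sub>F j in sequentially. \<forall>k\<ge>j. max (a $ i) (t j $ i) \<le> max (a $ i) (t k $ i)"
      using r(2) Ints tA \<open>a \<in> A\<close> unfolding t_def
      by (intro eventually_mono_max_monoseq_Ints) auto
  qed
  then obtain K where K: "\<And>i j k. K \<le> j \<Longrightarrow> j \<le> k \<Longrightarrow> max (a $ i) (t j $ i) \<le> max (a $ i) (t k $ i)"
    unfolding eventually_sequentially by blast
  define L where "L = K + N"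
  define B where "B = insert a (t ` {K..L})"
  have "B \<in> Nb A"
  proof (rule Nb_if_dominated[OF edge[of L]])
    show "B \<subseteq> A" unfolding B_def using \<open>a \<in> A\<close> tA by auto
    fix b i assume "b \<in> B"
    then consider "b = a" | j where "K \<le> j" "j \<le> L" "b = t j"
      unfolding B_def by auto
    then show "\<exists>c\<in>{a, t L}. b $ i \<le> c $ i"
    proof cases
      case 2
      then have "max (a $ i) (b $ i) \<le> max (a $ i) (t L $ i)" using K by blast
      then have "b $ i \<le> a $ i \<or> b $ i \<le> t L $ i" by linarith
      then show ?thesis by blast
    qed auto
  qed
  moreover have "card B \<ge> N + 1"
  proof -
    have "card (t ` {K..L}) = N + 1"
      using card_image[OF inj_on_subset[OF \<open>inj t\<close>]] by (simp add: L_def)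
    moreover have "card (t ` {K..L}) \<le> card B"
      unfolding B_def by (intro card_mono) auto
    ultimately show ?thesis by simp
  qed
  ultimately show False using bounded[of B] by (simp add: B_def)
qed

lemma locally_finite_if_finite_neighbors:
  assumes "\<And>a. a \<in> A \<Longrightarrow> finite {a'\<in>A. neighbors A a a'}"
  shows "locally_finite_complex A (Nb A)"
  unfolding locally_finite_complex_def
proof
  fix v assume "v \<in> A"
  have "B \<subseteq> insert v {a'\<in>A. neighbors A v a'}" if "B \<in> Nb A" "v \<in> B" for B
  proof
    fix b assume "b \<in> B"
    have "B \<subseteq> A" using \<open>B \<in> Nb A\<close> unfolding Nb_def by blast
    moreover have "{v, b} \<in> Nb A"
      by (rule Nb_subset_closed[OF \<open>B \<in> Nb A\<close>]) (use \<open>v \<in> B\<close> \<open>b \<in> B\<close> in simp)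
    ultimately show "b \<in> insert v {a'\<in>A. neighbors A v a'}"
      using \<open>b \<in> B\<close> unfolding neighbors_def by blast
  qed
  then have "{B \<in> Nb A. v \<in> B} \<subseteq> Pow (insert v {a'\<in>A. neighbors A v a'})"
    by blast
  moreover have "finite (Pow (insert v {a'\<in>A. neighbors A v a'}))"
    using assms[OF \<open>v \<in> A\<close>] by simp
  ultimately show "finite {B \<in> Nb A. v \<in> B}"
    by (rule finite_subset)
qed

theorem mainTheorem1:
  fixes A :: "(real^'n) set" and d :: nat
  assumes "\<forall>a\<in>A. \<forall>i. a $ i \<in> \<int>"
    and "dim_Nb_eq A d"
  shows "locally_finite_complex A (Nb A) \<and> (\<forall>a\<in>A. finite {a'\<in>A. neighbors A a a'})"
proof -
  have "\<And>B. B \<in> Nb A \<Longrightarrow> finite B \<Longrightarrow> card B \<le> d + 1"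
    using assms(2) unfolding dim_Nb_eq_def by blast
  then have "\<forall>a\<in>A. finite {a'\<in>A. neighbors A a a'}"
    using finite_neighbors_if_Nb_card_bounded[OF assms(1)] by blast
  then show ?thesis using locally_finite_if_finite_neighbors by blast
qed

end
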